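(* Consider any demand-private coded caching scheme with $N=2$ files and $K=2$ users. Then for every $i\in\{0,1\}$ and $j\in\{0,1\}$, with $\tilde i=(i+1)\bmod 2$, the conditional joint distributions satisfy $(X,Z_1,W_j\mid D_1=j)\sim(X,Z_1,W_j\mid D_0=i,D_1=j)\sim(X,Z_1,W_j\mid D_0=\tilde i,D_1=j)$ and $(X,Z_0,W_j\mid D_0=j)\sim(X,Z_0,W_j\mid D_0=j,D_1=i)\sim(X,Z_0,W_j\mid D_0=j,D_1=\tilde i)$, where $\sim$ denotes equality of (conditional) distributions.
   Context: Setting ($N=K=2$): files $W_0,W_1$ independent, uniform on $[2^F]=\{0,\dots,2^F-1\}$; demands $D_0,D_1$ of users $0,1$ independent and uniform on $\{0,1\}$. User $k$ shares a key $S_k$ (finite alphabet) with the server; the server has private randomness $P$ (finite alphabet); $P,S_0,S_1,D_0,D_1,W_0,W_1$ are mutually independent. Cache content $Z_k=(C_k(S_k,P,W_0,W_1),S_k)$ with $C_k$ valued in $[2^{MF}]$; broadcast $X=(E(W_0,W_1,D_0,D_1,P,S_0,S_1),J(D_0,D_1,P,S_0,S_1))$ with $E$ valued in $[2^{RF}]$ and $J$ valued in a finite set of negligible $\log_2$-size relative to $F$. The scheme is demand-private if (decodability) $W_{D_k}$ is a deterministic function of $(D_k,S_k,X,Z_k)$ for each $k$, and (privacy) $I(D_1;Z_0,X,D_0)=0$ and $I(D_0;Z_1,X,D_1)=0$. *)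

theory Defs
  imports "HOL-Probability.Probability"
begin

text \<open>Sample space of the N = K = 2 demand-private coded caching setting.
  An outcome is (P, S0, S1, D0, D1, W0, W1).\<close>

type_synonym ('p, 's0, 's1) outcome = "'p \<times> 's0 \<times> 's1 \<times> nat \<times> nat \<times> nat \<times> nat"

definition joint ::
  "nat \<Rightarrow> 'p pmf \<Rightarrow> 's0 pmf \<Rightarrow> 's1 pmf \<Rightarrow> ('p, 's0, 's1) outcome pmf" where
  "joint F pP pS0 pS1 =
     do { p \<leftarrow> pP; s0 \<leftarrow> pS0; s1 \<leftarrow> pS1;
          d0 \<leftarrow> pmf_of_set {0, 1}; d1 \<leftarrow> pmf_of_set {0, 1};
          w0 \<leftarrow> pmf_of_set {..<2 ^ F}; w1 \<leftarrow> pmf_of_set {..<2 ^ F};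
          return_pmf (p, s0, s1, d0, d1, w0, w1) }"

definition rvP :: "('p, 's0, 's1) outcome \<Rightarrow> 'p" where "rvP \<omega> = fst \<omega>"
definition rvS0 :: "('p, 's0, 's1) outcome \<Rightarrow> 's0" where "rvS0 \<omega> = fst (snd \<omega>)"
definition rvS1 :: "('p, 's0, 's1) outcome \<Rightarrow> 's1" where "rvS1 \<omega> = fst (snd (snd \<omega>))"
definition rvD0 :: "('p, 's0, 's1) outcome \<Rightarrow> nat" where "rvD0 \<omega> = fst (snd (snd (snd \<omega>)))"
definition rvD1 :: "('p, 's0, 's1) outcome \<Rightarrow> nat" where "rvD1 \<omega> = fst (snd (snd (snd (snd \<omega>))))"
definition rvW0 :: "('p, 's0, 's1) outcome \<Rightarrow> nat" where "rvW0 \<omega> = fst (snd (snd (snd (snd (snd \<omega>)))))"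
definition rvW1 :: "('p, 's0, 's1) outcome \<Rightarrow> nat" where "rvW1 \<omega> = snd (snd (snd (snd (snd (snd \<omega>)))))"

definition rvD :: "nat \<Rightarrow> ('p, 's0, 's1) outcome \<Rightarrow> nat" where
  "rvD k \<omega> = (if k = 0 then rvD0 \<omega> else rvD1 \<omega>)"
definition rvW :: "nat \<Rightarrow> ('p, 's0, 's1) outcome \<Rightarrow> nat" where
  "rvW j \<omega> = (if j = 0 then rvW0 \<omega> else rvW1 \<omega>)"

definition rvX ::
  "(nat \<Rightarrow> nat \<Rightarrow> nat \<Rightarrow> nat \<Rightarrow> 'p \<Rightarrow> 's0 \<Rightarrow> 's1 \<Rightarrow> nat) \<Rightarrow>
   (nat \<Rightarrow> nat \<Rightarrow> 'p \<Rightarrow> 's0 \<Rightarrow> 's1 \<Rightarrow> 'j) \<Rightarrow> ('p, 's0, 's1) outcome \<Rightarrow> nat \<times> 'j" where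
  "rvX E J \<omega> = (E (rvW0 \<omega>) (rvW1 \<omega>) (rvD0 \<omega>) (rvD1 \<omega>) (rvP \<omega>) (rvS0 \<omega>) (rvS1 \<omega>),
                J (rvD0 \<omega>) (rvD1 \<omega>) (rvP \<omega>) (rvS0 \<omega>) (rvS1 \<omega>))"

definition rvZ0 ::
  "('s0 \<Rightarrow> 'p \<Rightarrow> nat \<Rightarrow> nat \<Rightarrow> nat) \<Rightarrow> ('p, 's0, 's1) outcome \<Rightarrow> nat \<times> 's0" where
  "rvZ0 C0 \<omega> = (C0 (rvS0 \<omega>) (rvP \<omega>) (rvW0 \<omega>) (rvW1 \<omega>), rvS0 \<omega>)"
definition rvZ1 ::
  "('s1 \<Rightarrow> 'p \<Rightarrow> nat \<Rightarrow> nat \<Rightarrow> nat) \<Rightarrow> ('p, 's0, 's1) outcome \<Rightarrow> nat \<times> 's1" where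
  "rvZ1 C1 \<omega> = (C1 (rvS1 \<omega>) (rvP \<omega>) (rvW0 \<omega>) (rvW1 \<omega>), rvS1 \<omega>)"

definition prob_ev :: "'a pmf \<Rightarrow> ('a \<Rightarrow> bool) \<Rightarrow> real" where
  "prob_ev \<Omega> A = measure_pmf.prob \<Omega> {\<omega>. A \<omega>}"

definition mutual_info :: "'a pmf \<Rightarrow> ('a \<Rightarrow> 'u) \<Rightarrow> ('a \<Rightarrow> 'v) \<Rightarrow> real" where
  "mutual_info \<Omega> U V =
     (\<Sum>(u, v) \<in> (\<lambda>\<omega>. (U \<omega>, V \<omega>)) ` set_pmf \<Omega>.
        prob_ev \<Omega> (\<lambda>\<omega>. U \<omega> = u \<and> V \<omega> = v) *
        log 2 (prob_ev \<Omega> (\<lambda>\<omega>. U \<omega> = u \<and> V \<omega> = v) /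
               (prob_ev \<Omega> (\<lambda>\<omega>. U \<omega> = u) * prob_ev \<Omega> (\<lambda>\<omega>. V \<omega> = v))))"

definition cond_dist :: "'a pmf \<Rightarrow> ('a \<Rightarrow> 'u) \<Rightarrow> ('a \<Rightarrow> bool) \<Rightarrow> 'u pmf" where
  "cond_dist \<Omega> U A = map_pmf U (cond_pmf \<Omega> {\<omega>. A \<omega>})"

text \<open>A demand-private scheme for N = K = 2 with file size F, memory M, rate R.\<close>
definition demand_private_scheme ::
  "nat \<Rightarrow> real \<Rightarrow> real \<Rightarrow> 'p pmf \<Rightarrow> 's0 pmf \<Rightarrow> 's1 pmf \<Rightarrow>
   ('s0 \<Rightarrow> 'p \<Rightarrow> nat \<Rightarrow> nat \<Rightarrow> nat) \<Rightarrow> ('s1 \<Rightarrow> 'p \<Rightarrow> nat \<Rightarrow> nat \<Rightarrow> nat) \<Rightarrow>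
   (nat \<Rightarrow> nat \<Rightarrow> nat \<Rightarrow> nat \<Rightarrow> 'p \<Rightarrow> 's0 \<Rightarrow> 's1 \<Rightarrow> nat) \<Rightarrow>
   (nat \<Rightarrow> nat \<Rightarrow> 'p \<Rightarrow> 's0 \<Rightarrow> 's1 \<Rightarrow> 'j) \<Rightarrow> bool" where
  "demand_private_scheme F M R pP pS0 pS1 C0 C1 E J \<longleftrightarrow>
     (let \<Omega> = joint F pP pS0 pS1 in
      \<comment> \<open>cache and transmission alphabets\<close>
      (\<forall>s p w0 w1. real (C0 s p w0 w1) < 2 powr (M * real F)) \<and>
      (\<forall>s p w0 w1. real (C1 s p w0 w1) < 2 powr (M * real F)) \<and>
      (\<forall>w0 w1 d0 d1 p s0 s1. real (E w0 w1 d0 d1 p s0 s1) < 2 powr (R * real F)) \<and>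
      \<comment> \<open>decodability: W_{D_k} is a deterministic function of (D_k, S_k, X, Z_k)\<close>
      (\<exists>g. \<forall>\<omega>\<in>set_pmf \<Omega>.
         g (rvD0 \<omega>, rvS0 \<omega>, rvX E J \<omega>, rvZ0 C0 \<omega>) = rvW (rvD0 \<omega>) \<omega>) \<and>
      (\<exists>g. \<forall>\<omega>\<in>set_pmf \<Omega>.
         g (rvD1 \<omega>, rvS1 \<omega>, rvX E J \<omega>, rvZ1 C1 \<omega>) = rvW (rvD1 \<omega>) \<omega>) \<and>
      \<comment> \<open>privacy\<close>
      mutual_info \<Omega> rvD1 (\<lambda>\<omega>. (rvZ0 C0 \<omega>, rvX E J \<omega>, rvD0 \<omega>)) = 0 \<and>
      mutual_info \<Omega> rvD0 (\<lambda>\<omega>. (rvZ1 C1 \<omega>, rvX E J \<omega>, rvD1 \<omega>)) = 0)"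

end

theory Submission
  imports Defs
begin

text \<open>Privacy for user 1 says that D0 is independent of what user 1 observes, Y = (Z1, X, D1).
  On the event D1 = j, decodability makes (X, Z1, W_j) a function of Y, and the event itself
  is determined by Y; since conditioning on D0 = i leaves the law of Y unchanged, it leaves the
  conditional law of (X, Z1, W_j) unchanged as well. Symmetrically for user 0. Zero mutual
  information yields independence by the equality case of Gibbs' inequality.\<close>

definition relative_entropy :: "real \<Rightarrow> 'a pmf \<Rightarrow> 'a pmf \<Rightarrow> real" where
  "relative_entropy b p q = (\<Sum>x\<in>set_pmf p. pmf p x * log b (pmf p x / pmf q x))"

lemma diff_le_mult_ln_divide:
  fixes a c :: real
  assumes "0 < a" "0 < c"
  shows "a - c \<le> a * ln (a / c)"
proof -
  have "a * ln (c / a) \<le> a * (c / a - 1)"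
    using assms by (intro mult_left_mono ln_le_minus_one) auto
  also have "\<dots> = c - a"
    using assms by (simp add: field_simps)
  finally have "a * ln (c / a) \<le> c - a" .
  moreover have "ln (a / c) = - ln (c / a)"
    using assms by (simp add: ln_div)
  ultimately show ?thesis
    by simp
qed

lemma mult_ln_divide_eq_diff_iff:
  fixes a c :: real
  assumes "0 < a" "0 < c"
  shows "a * ln (a / c) = a - c \<longleftrightarrow> a = c"
proof
  assume "a * ln (a / c) = a - c"
  then have "ln (c / a) = c / a - 1"
    using assms by (simp add: ln_div field_simps)
  then show "a = c"
    using ln_eq_minus_one[of "c / a"] assms by simp
qed simp

lemma relative_entropy_eq_0_imp_eq:
  fixes p q :: "'a pmf" and b :: real
  assumes b: "1 < b" and fin: "finite (set_pmf p)" and supp: "set_pmf p \<subseteq> set_pmf q"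
    and zero: "relative_entropy b p q = 0"
  shows "p = q"
proof -
  define S where "S = set_pmf p"
  define gap where "gap x = pmf p x * ln (pmf p x / pmf q x) - (pmf p x - pmf q x)" for x
  have pos: "0 < pmf p x" "0 < pmf q x" if "x \<in> S" for x
    using that supp by (auto simp: S_def pmf_positive)
  have gap_nonneg: "0 \<le> gap x" if "x \<in> S" for x
    using diff_le_mult_ln_divide[OF pos[OF that]] by (simp add: gap_def)
  have "(\<Sum>x\<in>S. pmf p x * ln (pmf p x / pmf q x)) = ln b * relative_entropy b p q"
    using b by (simp add: relative_entropy_def S_def log_def sum_distrib_left)
  moreover have "(\<Sum>x\<in>S. pmf p x) = 1"
    using fin by (simp add: S_def sum_pmf_eq_1)
  moreover have "(\<Sum>x\<in>S. pmf q x) = measure q S"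
    using fin by (simp add: S_def measure_measure_pmf_finite)
  ultimately have sum_gap: "(\<Sum>x\<in>S. gap x) = measure q S - 1"
    using zero by (simp add: gap_def sum_subtractf)
  moreover have "0 \<le> (\<Sum>x\<in>S. gap x)"
    using gap_nonneg by (simp add: sum_nonneg)
  ultimately have q_S_1: "measure q S = 1"
    using measure_pmf.prob_le_1[of q S] by linarith
  then have "(\<Sum>x\<in>S. gap x) = 0"
    using sum_gap by simp
  then have "gap x = 0" if "x \<in> S" for x
    using sum_nonneg_eq_0_iff[of S gap] fin gap_nonneg that by (simp add: S_def)
  then have on_S: "pmf p x = pmf q x" if "x \<in> S" for x
    using mult_ln_divide_eq_diff_iff[OF pos[OF that]] that by (simp add: gap_def)
  have "set_pmf q \<subseteq> S"
    using q_S_1 by (simp add: measure_pmf.prob_eq_1 AE_measure_pmf_iff subset_eq)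
  then have "pmf p x = pmf q x" if "x \<notin> S" for x
    using that by (auto simp: S_def set_pmf_iff)
  with on_S show ?thesis
    by (metis pmf_eqI)
qed

lemma mutual_info_eq_relative_entropy:
  "mutual_info \<Omega> U V =
     relative_entropy 2 (map_pmf (\<lambda>\<omega>. (U \<omega>, V \<omega>)) \<Omega>) (pair_pmf (map_pmf U \<Omega>) (map_pmf V \<Omega>))"
proof -
  have joint: "prob_ev \<Omega> (\<lambda>\<omega>. U \<omega> = u \<and> V \<omega> = v) = pmf (map_pmf (\<lambda>\<omega>. (U \<omega>, V \<omega>)) \<Omega>) (u, v)"
    for u v
    by (simp add: prob_ev_def pmf_map vimage_def)
  have product: "prob_ev \<Omega> (\<lambda>\<omega>. U \<omega> = u) * prob_ev \<Omega> (\<lambda>\<omega>. V \<omega> = v) =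
      pmf (pair_pmf (map_pmf U \<Omega>) (map_pmf V \<Omega>)) (u, v)" for u v
    by (simp add: prob_ev_def pmf_pair pmf_map vimage_def)
  show ?thesis
    unfolding mutual_info_def joint product by (simp add: relative_entropy_def case_prod_beta)
qed

lemma mutual_info_eq_0_imp_indep:
  assumes "finite (set_pmf \<Omega>)" and "mutual_info \<Omega> U V = 0"
  shows "map_pmf (\<lambda>\<omega>. (U \<omega>, V \<omega>)) \<Omega> = pair_pmf (map_pmf U \<Omega>) (map_pmf V \<Omega>)"
  using assms by (intro relative_entropy_eq_0_imp_eq[where b = 2])
    (auto simp: mutual_info_eq_relative_entropy)

lemma measure_cond_pmf:
  assumes "set_pmf p \<inter> A \<noteq> {}"
  shows "measure (cond_pmf p A) B = measure p (A \<inter> B) / measure p A"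
  using assms by (simp add: cond_pmf.rep_eq emeasure_measure_pmf_not_zero)

lemma cond_pmf_cond_pmf:
  assumes "set_pmf p \<inter> A \<inter> B \<noteq> {}"
  shows "cond_pmf (cond_pmf p A) B = cond_pmf p (A \<inter> B)"
proof (rule pmf_eqI)
  fix x
  have A: "set_pmf p \<inter> A \<noteq> {}"
    using assms by blast
  then have AB: "set_pmf (cond_pmf p A) \<inter> B \<noteq> {}"
    using assms by (simp add: Int_assoc)
  have "measure p A \<noteq> 0"
    using A by (simp add: measure_measure_pmf_not_zero)
  then show "pmf (cond_pmf (cond_pmf p A) B) x = pmf (cond_pmf p (A \<inter> B)) x"
    using A AB assms by (simp add: pmf_cond measure_cond_pmf Int_assoc)
qed

lemma map_cond_pmf_indep:
  assumes indep: "map_pmf (\<lambda>\<omega>. (D \<omega>, Y \<omega>)) p = pair_pmf (map_pmf D p) (map_pmf Y p)"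
    and "set_pmf p \<inter> D -` {i} \<noteq> {}"
  shows "map_pmf Y (cond_pmf p (D -` {i})) = map_pmf Y p"
proof (rule pmf_eqI)
  fix y
  have "measure p (D -` {i}) \<noteq> 0"
    using assms(2) by (simp add: measure_measure_pmf_not_zero)
  moreover have "measure p (D -` {i} \<inter> Y -` {y}) = measure p (D -` {i}) * pmf (map_pmf Y p) y"
    using arg_cong[OF indep, of "\<lambda>q. pmf q (i, y)"] by (simp add: pmf_map pmf_pair vimage_def Int_def)
  ultimately show "pmf (map_pmf Y (cond_pmf p (D -` {i}))) y = pmf (map_pmf Y p) y"
    using assms(2) by (simp add: pmf_map measure_cond_pmf)
qed

lemma map_cond_pmf_vimage_factor:
  assumes "set_pmf p \<inter> Y -` T \<noteq> {}"
    and "\<And>\<omega>. \<omega> \<in> set_pmf p \<Longrightarrow> Y \<omega> \<in> T \<Longrightarrow> V \<omega> = h (Y \<omega>)"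
  shows "map_pmf V (cond_pmf p (Y -` T)) = map_pmf h (cond_pmf (map_pmf Y p) T)"
proof -
  have "map_pmf V (cond_pmf p (Y -` T)) = map_pmf (h \<circ> Y) (cond_pmf p (Y -` T))"
    using assms by (intro map_pmf_cong) auto
  also have "\<dots> = map_pmf h (cond_pmf (map_pmf Y p) T)"
    using assms(1) by (simp add: cond_map_pmf pmf.map_comp)
  finally show ?thesis .
qed

lemma cond_dist_indep_eq:
  fixes \<Omega> :: "'a pmf" and D :: "'a \<Rightarrow> 'd" and Y :: "'a \<Rightarrow> 'y"
  assumes indep: "map_pmf (\<lambda>\<omega>. (D \<omega>, Y \<omega>)) \<Omega> = pair_pmf (map_pmf D \<Omega>) (map_pmf Y \<Omega>)"
    and D_i: "\<exists>\<omega>\<in>set_pmf \<Omega>. D \<omega> = i" and Q: "\<exists>\<omega>\<in>set_pmf \<Omega>. Q (Y \<omega>)"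
    and factor: "\<And>\<omega>. \<omega> \<in> set_pmf \<Omega> \<Longrightarrow> Q (Y \<omega>) \<Longrightarrow> V \<omega> = h (Y \<omega>)"
  shows "cond_dist \<Omega> V (\<lambda>\<omega>. Q (Y \<omega>)) = cond_dist \<Omega> V (\<lambda>\<omega>. D \<omega> = i \<and> Q (Y \<omega>))"
proof -
  define \<Omega>' where "\<Omega>' = cond_pmf \<Omega> (D -` {i})"
  define T where "T = {y. Q y}"
  have ne_i: "set_pmf \<Omega> \<inter> D -` {i} \<noteq> {}"
    using D_i by auto
  have law_Y: "map_pmf Y \<Omega>' = map_pmf Y \<Omega>"
    unfolding \<Omega>'_def using indep ne_i by (rule map_cond_pmf_indep)
  have "Y ` set_pmf \<Omega>' = Y ` set_pmf \<Omega>"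
    using arg_cong[OF law_Y, of set_pmf] by simp
  then have ne': "set_pmf \<Omega>' \<inter> Y -` T \<noteq> {}"
    using Q by (force simp: T_def)
  have "set_pmf \<Omega> \<inter> D -` {i} \<inter> Y -` T \<noteq> {}"
    using ne' ne_i by (simp add: \<Omega>'_def)
  moreover have "{\<omega>. D \<omega> = i \<and> Q (Y \<omega>)} = D -` {i} \<inter> Y -` T"
    by (auto simp: T_def)
  ultimately have "cond_dist \<Omega> V (\<lambda>\<omega>. D \<omega> = i \<and> Q (Y \<omega>)) = map_pmf V (cond_pmf \<Omega>' (Y -` T))"
    by (simp add: cond_dist_def \<Omega>'_def cond_pmf_cond_pmf)
  also have "\<dots> = map_pmf h (cond_pmf (map_pmf Y \<Omega>') T)"
    using ne_i factor by (intro map_cond_pmf_vimage_factor[OF ne']) (auto simp: \<Omega>'_def T_def)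
  also have "\<dots> = map_pmf V (cond_pmf \<Omega> (Y -` T))"
    unfolding law_Y using Q factor by (intro map_cond_pmf_vimage_factor[symmetric]) (auto simp: T_def)
  also have "Y -` T = {\<omega>. Q (Y \<omega>)}"
    by (simp add: T_def vimage_def)
  finally show ?thesis
    by (simp add: cond_dist_def)
qed

lemma finite_set_pmf_joint:
  "finite (set_pmf (joint F (pP :: 'p::finite pmf) (pS0 :: 's0::finite pmf) (pS1 :: 's1::finite pmf)))"
proof (rule finite_subset)
  show "set_pmf (joint F pP pS0 pS1) \<subseteq> UNIV \<times> UNIV \<times> UNIV \<times> {0, 1} \<times> {0, 1} \<times> {..<2 ^ F} \<times> {..<2 ^ F}"
    by (auto simp: joint_def lessThan_empty_iff)
qed simp

lemma ex_rvD0_joint: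
  assumes "i \<in> {0, 1}"
  shows "\<exists>\<omega>\<in>set_pmf (joint F pP pS0 pS1). rvD0 \<omega> = i"
proof -
  have "map_pmf rvD0 (joint F pP pS0 pS1) = pmf_of_set {0, 1}"
    by (simp add: joint_def rvD0_def map_bind_pmf bind_return_pmf')
  from arg_cong[OF this, of set_pmf] assms have "i \<in> rvD0 ` set_pmf (joint F pP pS0 pS1)"
    by simp
  then show ?thesis
    by (metis imageE)
qed

lemma ex_rvD1_joint:
  assumes "j \<in> {0, 1}"
  shows "\<exists>\<omega>\<in>set_pmf (joint F pP pS0 pS1). rvD1 \<omega> = j"
proof -
  have "map_pmf rvD1 (joint F pP pS0 pS1) = pmf_of_set {0, 1}"
    by (simp add: joint_def rvD1_def map_bind_pmf bind_return_pmf')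
  from arg_cong[OF this, of set_pmf] assms have "j \<in> rvD1 ` set_pmf (joint F pP pS0 pS1)"
    by simp
  then show ?thesis
    by (metis imageE)
qed

lemma cond_dist_decodable_indep:
  fixes \<Omega> :: "'a pmf" and D :: "'a \<Rightarrow> 'd" and Dk :: "'a \<Rightarrow> 'k" and W :: "'k \<Rightarrow> 'a \<Rightarrow> 'w"
  assumes "finite (set_pmf \<Omega>)"
    and privacy: "mutual_info \<Omega> D (\<lambda>\<omega>. (Z \<omega>, X \<omega>, Dk \<omega>)) = 0"
    and decode: "\<forall>\<omega>\<in>set_pmf \<Omega>. g (Dk \<omega>) (X \<omega>) (Z \<omega>) = W (Dk \<omega>) \<omega>"
    and "\<exists>\<omega>\<in>set_pmf \<Omega>. D \<omega> = i" and "\<exists>\<omega>\<in>set_pmf \<Omega>. Dk \<omega> = j"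
  shows "cond_dist \<Omega> (\<lambda>\<omega>. (X \<omega>, Z \<omega>, W j \<omega>)) (\<lambda>\<omega>. Dk \<omega> = j) =
         cond_dist \<Omega> (\<lambda>\<omega>. (X \<omega>, Z \<omega>, W j \<omega>)) (\<lambda>\<omega>. D \<omega> = i \<and> Dk \<omega> = j)"
proof -
  let ?Y = "\<lambda>\<omega>. (Z \<omega>, X \<omega>, Dk \<omega>)"
  have "cond_dist \<Omega> (\<lambda>\<omega>. (X \<omega>, Z \<omega>, W j \<omega>)) (\<lambda>\<omega>. snd (snd (?Y \<omega>)) = j) =
        cond_dist \<Omega> (\<lambda>\<omega>. (X \<omega>, Z \<omega>, W j \<omega>)) (\<lambda>\<omega>. D \<omega> = i \<and> snd (snd (?Y \<omega>)) = j)"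
  proof (rule cond_dist_indep_eq[where h = "\<lambda>(z, x, d). (x, z, g j x z)"])
    show "map_pmf (\<lambda>\<omega>. (D \<omega>, ?Y \<omega>)) \<Omega> = pair_pmf (map_pmf D \<Omega>) (map_pmf ?Y \<Omega>)"
      using assms(1) privacy by (rule mutual_info_eq_0_imp_indep)
    fix \<omega>
    assume "\<omega> \<in> set_pmf \<Omega>" and "snd (snd (?Y \<omega>)) = j"
    with decode show "(X \<omega>, Z \<omega>, W j \<omega>) = (\<lambda>(z, x, d). (x, z, g j x z)) (?Y \<omega>)"
      by auto
  qed (use assms(4,5) in simp_all)
  then show ?thesis
    by simp
qed

lemma cond_dist_user1_indep_D0:
  fixes pP :: "'p::finite pmf" and pS0 :: "'s0::finite pmf" and pS1 :: "'s1::finite pmf"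
  assumes "demand_private_scheme F M R pP pS0 pS1 C0 C1 E J"
    and "i \<in> {0, 1}" and "j \<in> {0, 1}"
  defines "V \<equiv> \<lambda>\<omega>. (rvX E J \<omega>, rvZ1 C1 \<omega>, rvW j \<omega>)"
  shows "cond_dist (joint F pP pS0 pS1) V (\<lambda>\<omega>. rvD1 \<omega> = j) =
         cond_dist (joint F pP pS0 pS1) V (\<lambda>\<omega>. rvD0 \<omega> = i \<and> rvD1 \<omega> = j)"
proof -
  let ?\<Omega> = "joint F pP pS0 pS1"
  obtain g where decode: "\<forall>\<omega>\<in>set_pmf ?\<Omega>. g (rvD1 \<omega>, rvS1 \<omega>, rvX E J \<omega>, rvZ1 C1 \<omega>) = rvW (rvD1 \<omega>) \<omega>"
    and privacy: "mutual_info ?\<Omega> rvD0 (\<lambda>\<omega>. (rvZ1 C1 \<omega>, rvX E J \<omega>, rvD1 \<omega>)) = 0"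
    using assms(1) unfolding demand_private_scheme_def Let_def by blast
  from decode have "\<forall>\<omega>\<in>set_pmf ?\<Omega>. g (rvD1 \<omega>, snd (rvZ1 C1 \<omega>), rvX E J \<omega>, rvZ1 C1 \<omega>) = rvW (rvD1 \<omega>) \<omega>"
    by (simp add: rvZ1_def)
  then show ?thesis
    unfolding V_def
    by (rule cond_dist_decodable_indep[OF finite_set_pmf_joint privacy,
          where W = rvW and g = "\<lambda>d x z. g (d, snd z, x, z)" and j = j])
      (simp_all add: ex_rvD0_joint[OF assms(2)] ex_rvD1_joint[OF assms(3)])
qed

lemma cond_dist_user0_indep_D1:
  fixes pP :: "'p::finite pmf" and pS0 :: "'s0::finite pmf" and pS1 :: "'s1::finite pmf"
  assumes "demand_private_scheme F M R pP pS0 pS1 C0 C1 E J"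
    and "i \<in> {0, 1}" and "j \<in> {0, 1}"
  defines "V \<equiv> \<lambda>\<omega>. (rvX E J \<omega>, rvZ0 C0 \<omega>, rvW j \<omega>)"
  shows "cond_dist (joint F pP pS0 pS1) V (\<lambda>\<omega>. rvD0 \<omega> = j) =
         cond_dist (joint F pP pS0 pS1) V (\<lambda>\<omega>. rvD0 \<omega> = j \<and> rvD1 \<omega> = i)"
proof -
  let ?\<Omega> = "joint F pP pS0 pS1"
  obtain g where decode: "\<forall>\<omega>\<in>set_pmf ?\<Omega>. g (rvD0 \<omega>, rvS0 \<omega>, rvX E J \<omega>, rvZ0 C0 \<omega>) = rvW (rvD0 \<omega>) \<omega>"
    and privacy: "mutual_info ?\<Omega> rvD1 (\<lambda>\<omega>. (rvZ0 C0 \<omega>, rvX E J \<omega>, rvD0 \<omega>)) = 0"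
    using assms(1) unfolding demand_private_scheme_def Let_def by blast
  from decode have "\<forall>\<omega>\<in>set_pmf ?\<Omega>. g (rvD0 \<omega>, snd (rvZ0 C0 \<omega>), rvX E J \<omega>, rvZ0 C0 \<omega>) = rvW (rvD0 \<omega>) \<omega>"
    by (simp add: rvZ0_def)
  then have "cond_dist ?\<Omega> V (\<lambda>\<omega>. rvD0 \<omega> = j) = cond_dist ?\<Omega> V (\<lambda>\<omega>. rvD1 \<omega> = i \<and> rvD0 \<omega> = j)"
    unfolding V_def
    by (rule cond_dist_decodable_indep[OF finite_set_pmf_joint privacy,
          where W = rvW and g = "\<lambda>d x z. g (d, snd z, x, z)" and j = j])
      (simp_all add: ex_rvD1_joint[OF assms(2)] ex_rvD0_joint[OF assms(3)])
  then show ?thesis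
    by (simp add: conj_commute)
qed

theorem lemma1:
  fixes F :: nat and M R :: real
    and pP :: "'p::finite pmf" and pS0 :: "'s0::finite pmf" and pS1 :: "'s1::finite pmf"
    and C0 :: "'s0 \<Rightarrow> 'p \<Rightarrow> nat \<Rightarrow> nat \<Rightarrow> nat" and C1 :: "'s1 \<Rightarrow> 'p \<Rightarrow> nat \<Rightarrow> nat \<Rightarrow> nat"
    and E :: "nat \<Rightarrow> nat \<Rightarrow> nat \<Rightarrow> nat \<Rightarrow> 'p \<Rightarrow> 's0 \<Rightarrow> 's1 \<Rightarrow> nat"
    and J :: "nat \<Rightarrow> nat \<Rightarrow> 'p \<Rightarrow> 's0 \<Rightarrow> 's1 \<Rightarrow> 'j::finite"
  assumes "demand_private_scheme F M R pP pS0 pS1 C0 C1 E J"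
    and "i \<in> {0, 1::nat}" and "j \<in> {0, 1::nat}"
  shows "(let \<Omega> = joint F pP pS0 pS1; it = (i + 1) mod 2;
              V1 = (\<lambda>\<omega>. (rvX E J \<omega>, rvZ1 C1 \<omega>, rvW j \<omega>));
              V0 = (\<lambda>\<omega>. (rvX E J \<omega>, rvZ0 C0 \<omega>, rvW j \<omega>)) in
          cond_dist \<Omega> V1 (\<lambda>\<omega>. rvD1 \<omega> = j) =
            cond_dist \<Omega> V1 (\<lambda>\<omega>. rvD0 \<omega> = i \<and> rvD1 \<omega> = j) \<and>
          cond_dist \<Omega> V1 (\<lambda>\<omega>. rvD0 \<omega> = i \<and> rvD1 \<omega> = j) =
            cond_dist \<Omega> V1 (\<lambda>\<omega>. rvD0 \<omega> = it \<and> rvD1 \<omega> = j) \<and>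
          cond_dist \<Omega> V0 (\<lambda>\<omega>. rvD0 \<omega> = j) =
            cond_dist \<Omega> V0 (\<lambda>\<omega>. rvD0 \<omega> = j \<and> rvD1 \<omega> = i) \<and>
          cond_dist \<Omega> V0 (\<lambda>\<omega>. rvD0 \<omega> = j \<and> rvD1 \<omega> = i) =
            cond_dist \<Omega> V0 (\<lambda>\<omega>. rvD0 \<omega> = j \<and> rvD1 \<omega> = it))"
proof -
  have it: "(i + 1) mod 2 \<in> {0, 1::nat}"
    by auto
  show ?thesis
    using cond_dist_user1_indep_D0[OF assms(1) assms(2,3)] cond_dist_user1_indep_D0[OF assms(1) it assms(3)]
      cond_dist_user0_indep_D1[OF assms(1) assms(2,3)] cond_dist_user0_indep_D1[OF assms(1) it assms(3)]
    by (simp add: Let_def)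
qed

end
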